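(* Let $d=1$, $\mathcal{O}_1=\mathbb{Z}[i]$, $\Delta$ a positive integer not of the form $\beta\bar\beta$ with $\beta\in\mathbb{Z}[i]$, $k\ge1$ odd, and $$P_{k,\Delta}(z,\bar z)=\sum_{\substack{(a,b,c)\in\mathbb{Z}\times\mathbb{Z}[i]\times\mathbb{Z}\\ b\bar b-ac=\Delta,\ c<0<a}}\left(az\bar z+bz+\bar b\bar z+c\right)^k .$$ Then $P_{k,\Delta}\in W_{k,k}^1$. Consequently there is a (unique) $f\in C_p(\Gamma_1,V_{k,k})$ with $f(S)=P_{k,\Delta}$.
   Context: $V_{k,k}$: polynomials $\sum_{0\le i,j\le k}c_{ij}z^i\bar z^j$ over $\mathbb{C}$ with right action $(P|\gamma)(z,\bar z)=(cz+e)^k\overline{(cz+e)}^kP\!\left(\frac{az+b}{cz+e},\frac{\bar a\bar z+\bar b}{\bar c\bar z+\bar e}\right)$ for $\gamma=\begin{psmallmatrix}a&b\\c&e\end{psmallmatrix}$, extended linearly; $\ker(X)=\{P:P|X=0\}$. $S=\begin{psmallmatrix}0&-1\\1&0\end{psmallmatrix}$, $T=\begin{psmallmatrix}1&1\\0&1\end{psmallmatrix}$, $T_\omega=\begin{psmallmatrix}1&i\\0&1\end{psmallmatrix}$, $L=\begin{psmallmatrix}i&0\\0&-i\end{psmallmatrix}$, $U=TS$, $E=T_\omega SL$; $W_{k,k}=\ker(\mathbf{1}+S)\cap\ker(\mathbf{1}-L)\cap\ker(\mathbf{1}+U+U^2)\cap\ker(\mathbf{1}+E+E^2)$ and $W_{k,k}^1=\{P\in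 W_{k,k}:P(iz,\bar i\bar z)=P(z,\bar z)\}$. $\Gamma_1=\mathbf{PSL}(2,\mathbb{Z}[i])$ and $C_p(\Gamma_1,V_{k,k})$ is the space of $f:\Gamma_1\to V_{k,k}$ with $f(\gamma_1\gamma_2)=f(\gamma_1)|\gamma_2+f(\gamma_2)$ and $f(T)=f(T_\omega)=f(L)=0$. *)

theory Defs
  imports Complex_Main "HOL-Computational_Algebra.Polynomial"
begin

text \<open>Elements of V_{k,k} are polynomials in two formal variables z and zbar,
  represented as bivariate polynomials: the outer variable is z, the inner one is zbar.\<close>

type_synonym bipoly = "complex poly poly"

definition Zv :: bipoly where "Zv = [:0, 1:]"
definition Wv :: bipoly where "Wv = [:[:0, 1:]:]"
definition cst :: "complex \<Rightarrow> bipoly" where "cst c = [:[:c:]:]"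

definition bcoeff :: "bipoly \<Rightarrow> nat \<Rightarrow> nat \<Rightarrow> complex" where
  "bcoeff P i j = coeff (coeff P i) j"

definition eval2 :: "bipoly \<Rightarrow> complex \<Rightarrow> complex \<Rightarrow> complex" where
  "eval2 P z w = poly (map_poly (\<lambda>q. poly q w) P) z"

definition Vkk :: "nat \<Rightarrow> bipoly set" where
  "Vkk k = {P. \<forall>i j. (k < i \<or> k < j) \<longrightarrow> bcoeff P i j = 0}"

text \<open>2x2 complex matrices (a, b, c, e) = [[a, b], [c, e]]\<close>
type_synonym mat2 = "complex \<times> complex \<times> complex \<times> complex"

fun mmul :: "mat2 \<Rightarrow> mat2 \<Rightarrow> mat2" where
  "mmul (a, b, c, e) (a', b', c', e') =
     (a * a' + b * c', a * b' + b * e', c * a' + e * c', c * b' + e * e')"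

definition Imat :: mat2 where "Imat = (1, 0, 0, 1)"
definition Smat :: mat2 where "Smat = (0, -1, 1, 0)"
definition Tmat :: mat2 where "Tmat = (1, 1, 0, 1)"
definition Twmat :: mat2 where "Twmat = (1, \<i>, 0, 1)"
definition Lmat :: mat2 where "Lmat = (\<i>, 0, 0, -\<i>)"
definition Umat :: mat2 where "Umat = mmul Tmat Smat"
definition Emat :: mat2 where "Emat = mmul (mmul Twmat Smat) Lmat"

text \<open>The slash action
  (P|gamma)(z,zbar) = (cz+e)^k conj(cz+e)^k P((az+b)/(cz+e), conj((az+b)/(cz+e))),
  written out for P = sum c_ij z^i zbar^j of bidegree at most (k,k) as the polynomial
  sum c_ij (az+b)^i (cz+e)^(k-i) (conj a zbar + conj b)^j (conj c zbar + conj e)^(k-j).\<close>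
fun slash :: "nat \<Rightarrow> bipoly \<Rightarrow> mat2 \<Rightarrow> bipoly" where
  "slash k P (a, b, c, e) =
     (\<Sum>i\<le>k. \<Sum>j\<le>k. cst (bcoeff P i j)
        * (cst a * Zv + cst b) ^ i * (cst c * Zv + cst e) ^ (k - i)
        * (cst (cnj a) * Wv + cst (cnj b)) ^ j * (cst (cnj c) * Wv + cst (cnj e)) ^ (k - j))"

text \<open>Group ring elements: finite formal combinations, given as lists of (coefficient, matrix);
  the action is extended linearly.\<close>
definition slash_gr :: "nat \<Rightarrow> bipoly \<Rightarrow> (complex \<times> mat2) list \<Rightarrow> bipoly" where
  "slash_gr k P X = (\<Sum>(c, g) \<leftarrow> X. cst c * slash k P g)"

definition kerX :: "nat \<Rightarrow> (complex \<times> mat2) list \<Rightarrow> bipoly set" where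
  "kerX k X = {P \<in> Vkk k. slash_gr k P X = 0}"

definition Wkk :: "nat \<Rightarrow> bipoly set" where
  "Wkk k = kerX k [(1, Imat), (1, Smat)]
         \<inter> kerX k [(1, Imat), (-1, Lmat)]
         \<inter> kerX k [(1, Imat), (1, Umat), (1, mmul Umat Umat)]
         \<inter> kerX k [(1, Imat), (1, Emat), (1, mmul Emat Emat)]"

definition Wkk1 :: "nat \<Rightarrow> bipoly set" where
  "Wkk1 k = {P \<in> Wkk k. \<forall>z w. eval2 P (\<i> * z) (cnj \<i> * w) = eval2 P z w}"

definition gauss_ints :: "complex set" where
  "gauss_ints = {z. Re z \<in> \<int> \<and> Im z \<in> \<int>}"

text \<open>SL(2, Z[i]); PSL(2, Z[i]) is modelled by functions on SL(2,Z[i]) invariant under -1.\<close>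
definition SL2Zi :: "mat2 set" where
  "SL2Zi = {(a, b, c, e). a \<in> gauss_ints \<and> b \<in> gauss_ints \<and> c \<in> gauss_ints \<and> e \<in> gauss_ints
                         \<and> a * e - b * c = 1}"

fun mneg :: "mat2 \<Rightarrow> mat2" where
  "mneg (a, b, c, e) = (-a, -b, -c, -e)"

definition Cp :: "nat \<Rightarrow> (mat2 \<Rightarrow> bipoly) set" where
  "Cp k = {f. (\<forall>g \<in> SL2Zi. f g \<in> Vkk k \<and> f (mneg g) = f g)
             \<and> (\<forall>g1 \<in> SL2Zi. \<forall>g2 \<in> SL2Zi. f (mmul g1 g2) = slash k (f g1) g2 + f g2)
             \<and> f Tmat = 0 \<and> f Twmat = 0 \<and> f Lmat = 0}"

definition Pk_index :: "int \<Rightarrow> (int \<times> complex \<times> int) set" where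
  "Pk_index \<Delta> = {(a, b, c). b \<in> gauss_ints \<and> b * cnj b - of_int (a * c) = of_int \<Delta>
                               \<and> c < 0 \<and> 0 < a}"

definition Pk_Delta :: "nat \<Rightarrow> int \<Rightarrow> bipoly" where
  "Pk_Delta k \<Delta> =
     (\<Sum>(a, b, c) \<in> Pk_index \<Delta>.
        (cst (of_int a) * Zv * Wv + cst b * Zv + cst (cnj b) * Wv + cst (of_int c)) ^ k)"

end

theory Submission
  imports Defs
begin

text \<open>
  Write an integral binary hermitian form over \<open>\<int>[i]\<close> as \<open>Q = (A, B, C)\<close> with value
  \<open>Q(p, q) = A |p|\<^sup>2 + B p cnj q + cnj B cnj p q + C |q|\<^sup>2\<close> and discriminant
  \<open>|B|\<^sup>2 - A C = \<Delta>\<close>; then \<open>P\<^sub>k\<^sub>,\<^sub>\<Delta>\<close> is the sum of \<open>Q(z, 1)\<^sup>k\<close> over the forms with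
  \<open>Q(1, 0) > 0 > Q(0, 1)\<close>.
  Because \<open>\<Delta>\<close> is not a norm, no form vanishes at a nonzero vector of \<open>\<int>[i]\<^sup>2\<close>
  (a Davenport--Cassels descent), so for all vectors \<open>u, v\<close> the set \<open>S(u, v)\<close> of forms
  with \<open>Q(u) > 0 > Q(v)\<close> is finite, and \<open>S(u, w)\<close> is \<open>S(u, v) + S(v, w)\<close> up to pairs
  \<open>Q, -Q\<close> whose contributions cancel since \<open>k\<close> is odd.
  Since the slash action on \<open>Q(z, 1)\<^sup>k\<close> is the action of \<open>\<gamma>\<close> on forms,
  \<open>f(\<gamma>) = \<Sum>\<^bsub>Q \<in> S(e\<^sub>1, \<gamma>\<^sup>-\<^sup>1 e\<^sub>1)\<^esub> Q(z, 1)\<^sup>k\<close> is then a cocycle with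
  \<open>f(S) = P\<^sub>k\<^sub>,\<^sub>\<Delta>\<close>, vanishing on the upper triangular generators.
  The relations defining \<open>W\<^sub>k\<^sub>,\<^sub>k\<close> follow from the cocycle identity, invariance under
  \<open>z \<mapsto> i z\<close> from the bijection \<open>B \<mapsto> i B\<close>, and uniqueness from the fact that
  \<open>S\<close>, \<open>L\<close>, \<open>-1\<close> and the translations generate \<open>SL\<^sub>2(\<int>[i])\<close> (Euclidean algorithm).
\<close>

section \<open>Evaluation of bivariate polynomials\<close>

lemma eval2_pCons: "eval2 (pCons q P) z w = poly q w + z * eval2 P z w"
  by (simp add: eval2_def map_poly_pCons)

lemma eval2_0 [simp]: "eval2 0 z w = 0"
  by (simp add: eval2_def)

lemma eval2_1 [simp]: "eval2 1 z w = 1"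
  by (simp add: eval2_def)

lemma eval2_add [simp]: "eval2 (P + R) z w = eval2 P z w + eval2 R z w"
proof -
  have "map_poly (\<lambda>q. poly q w) (P + R) = map_poly (\<lambda>q. poly q w) P + map_poly (\<lambda>q. poly q w) R"
    by (intro poly_eqI) (simp add: coeff_map_poly)
  then show ?thesis by (simp add: eval2_def)
qed

lemma eval2_uminus [simp]: "eval2 (- P) z w = - eval2 P z w"
proof -
  have "map_poly (\<lambda>q. poly q w) (- P) = - map_poly (\<lambda>q. poly q w) P"
    by (intro poly_eqI) (simp add: coeff_map_poly)
  then show ?thesis by (simp add: eval2_def)
qed

lemma eval2_diff [simp]: "eval2 (P - R) z w = eval2 P z w - eval2 R z w"
  using eval2_add[of P "- R" z w] by simp

lemma eval2_smult: "eval2 (smult c P) z w = poly c w * eval2 P z w"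
  by (simp add: eval2_def map_poly_smult)

lemma eval2_mult [simp]: "eval2 (P * R) z w = eval2 P z w * eval2 R z w"
proof (induction P)
  case 0
  then show ?case by simp
next
  case (pCons a p)
  have "eval2 (pCons a p * R) z w = eval2 (smult a R + pCons 0 (p * R)) z w"
    by (simp add: mult_pCons_left)
  also have "\<dots> = poly a w * eval2 R z w + z * (eval2 p z w * eval2 R z w)"
    by (simp add: eval2_smult eval2_pCons pCons.IH)
  finally show ?case by (simp add: eval2_pCons algebra_simps)
qed

lemma eval2_power [simp]: "eval2 (P ^ n) z w = eval2 P z w ^ n"
  by (induction n) auto

lemma eval2_sum [simp]: "eval2 (sum F S) z w = (\<Sum>x\<in>S. eval2 (F x) z w)"
  by (induction S rule: infinite_finite_induct) auto

lemma eval2_cst [simp]: "eval2 (cst c) z w = c"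
  by (simp add: eval2_def cst_def map_poly_pCons)

lemma eval2_Zv [simp]: "eval2 Zv z w = z"
  by (simp add: eval2_def Zv_def map_poly_pCons)

lemma eval2_Wv [simp]: "eval2 Wv z w = w"
  by (simp add: eval2_def Wv_def map_poly_pCons)

lemma poly_eq_0_cofinite:
  fixes p :: "'a::{idom, ring_char_0} poly"
  assumes "finite X" and "\<And>x. x \<notin> X \<Longrightarrow> poly p x = 0"
  shows "p = 0"
proof (rule ccontr)
  assume "p \<noteq> 0"
  then have "finite {x. poly p x = 0}" by (rule poly_roots_finite)
  moreover have "UNIV - X \<subseteq> {x. poly p x = 0}" using assms(2) by blast
  ultimately have "finite (UNIV - X)" by (rule finite_subset[rotated])
  then show False using Diff_infinite_finite[OF assms(1) infinite_UNIV_char_0] by blast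
qed

lemma bipoly_eqI_eval2:
  assumes "finite Z0" "finite W0"
    and "\<And>z w. z \<notin> Z0 \<Longrightarrow> w \<notin> W0 \<Longrightarrow> eval2 P z w = eval2 R z w"
  shows "P = R"
proof -
  define D where "D = P - R"
  have "map_poly (\<lambda>q. poly q w) D = 0" if "w \<notin> W0" for w
    using assms(1) by (rule poly_eq_0_cofinite) (use assms(3) that in \<open>simp add: D_def eval2_def[symmetric]\<close>)
  moreover have "poly (coeff D i) w = coeff (map_poly (\<lambda>q. poly q w) D) i" for i w
    by (simp add: coeff_map_poly)
  ultimately have "coeff D i = 0" for i
    using assms(2) by (intro poly_eq_0_cofinite[of W0]) auto
  then show ?thesis by (simp add: D_def poly_eq_iff)
qed

lemma poly_eq_sum_upto:
  fixes p :: "'a::comm_semiring_1 poly"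
  assumes "degree p \<le> n"
  shows "poly p x = (\<Sum>i\<le>n. coeff p i * x ^ i)"
proof -
  have "poly p x = poly (\<Sum>i\<le>n. monom (coeff p i) i) x"
    using poly_as_sum_of_monoms'[OF assms] by simp
  then show ?thesis by (simp add: poly_sum poly_monom)
qed

definition bidegree_le :: "bipoly \<Rightarrow> nat \<Rightarrow> nat \<Rightarrow> bool" where
  "bidegree_le P m n \<longleftrightarrow> (\<forall>i j. (m < i \<or> n < j) \<longrightarrow> bcoeff P i j = 0)"

lemma Vkk_iff_bidegree_le: "P \<in> Vkk k \<longleftrightarrow> bidegree_le P k k"
  by (simp add: Vkk_def bidegree_le_def)

lemma bidegree_le_mono: "bidegree_le P m n \<Longrightarrow> m \<le> m' \<Longrightarrow> n \<le> n' \<Longrightarrow> bidegree_le P m' n'"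
  by (auto simp: bidegree_le_def)

lemma bidegree_le_0: "bidegree_le 0 m n"
  by (auto simp: bidegree_le_def bcoeff_def)

lemma bidegree_le_1: "bidegree_le 1 0 0"
  by (auto simp: bidegree_le_def bcoeff_def coeff_1)

lemma bidegree_le_add: "bidegree_le P m n \<Longrightarrow> bidegree_le R m n \<Longrightarrow> bidegree_le (P + R) m n"
  by (auto simp: bidegree_le_def bcoeff_def)

lemma bidegree_le_sum: "(\<And>x. x \<in> S \<Longrightarrow> bidegree_le (F x) m n) \<Longrightarrow> bidegree_le (sum F S) m n"
  by (induction S rule: infinite_finite_induct) (auto intro: bidegree_le_add bidegree_le_0)

lemma bidegree_le_degree_coeff: "bidegree_le P m n \<Longrightarrow> degree (coeff P i) \<le> n"
  by (rule degree_le) (auto simp: bidegree_le_def bcoeff_def)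

lemma bidegree_le_coeff_eq_0: "bidegree_le P m n \<Longrightarrow> m < i \<Longrightarrow> coeff P i = 0"
  by (rule poly_eqI) (auto simp: bidegree_le_def bcoeff_def)

lemma bidegree_le_mult:
  assumes P: "bidegree_le P m n" and R: "bidegree_le R m' n'"
  shows "bidegree_le (P * R) (m + m') (n + n')"
  unfolding bidegree_le_def
proof (intro allI impI)
  fix i j assume ij: "m + m' < i \<or> n + n' < j"
  have "coeff (coeff P l * coeff R (i - l)) j = 0" for l
  proof (cases "m + m' < i")
    case True
    then have "coeff P l = 0 \<or> coeff R (i - l) = 0"
      using bidegree_le_coeff_eq_0[OF P, of l] bidegree_le_coeff_eq_0[OF R, of "i - l"] by linarith
    then show ?thesis by auto
  next
    case False
    have "degree (coeff P l * coeff R (i - l)) \<le> n + n'"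
      using degree_mult_le[of "coeff P l" "coeff R (i - l)"]
        bidegree_le_degree_coeff[OF P, of l] bidegree_le_degree_coeff[OF R, of "i - l"] by linarith
    then show ?thesis using False ij by (simp add: coeff_eq_0)
  qed
  then show "bcoeff (P * R) i j = 0" by (simp add: bcoeff_def coeff_mult coeff_sum)
qed

lemma bidegree_le_power: "bidegree_le P m n \<Longrightarrow> bidegree_le (P ^ k) (k * m) (k * n)"
  by (induction k) (simp_all add: bidegree_le_1 bidegree_le_mult)

lemma bidegree_le_cst: "bidegree_le (cst c) 0 0"
  by (auto simp: bidegree_le_def bcoeff_def cst_def coeff_pCons split: nat.splits)

lemma bidegree_le_Zv: "bidegree_le Zv 1 0"
  by (auto simp: bidegree_le_def bcoeff_def Zv_def coeff_pCons coeff_1 split: nat.splits)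

lemma bidegree_le_Wv: "bidegree_le Wv 0 1"
  by (auto simp: bidegree_le_def bcoeff_def Wv_def coeff_pCons split: nat.splits)

lemma eval2_eq_sum_bcoeff:
  assumes "bidegree_le P m n"
  shows "eval2 P z w = (\<Sum>i\<le>m. \<Sum>j\<le>n. bcoeff P i j * z ^ i * w ^ j)"
proof -
  let ?p = "map_poly (\<lambda>q. poly q w) P"
  have coeff_p: "coeff ?p i = poly (coeff P i) w" for i
    by (simp add: coeff_map_poly)
  have "degree ?p \<le> m"
    by (rule degree_le) (auto simp: coeff_p bidegree_le_coeff_eq_0[OF assms])
  then have "eval2 P z w = (\<Sum>i\<le>m. coeff ?p i * z ^ i)"
    unfolding eval2_def by (rule poly_eq_sum_upto)
  also have "\<dots> = (\<Sum>i\<le>m. (\<Sum>j\<le>n. bcoeff P i j * w ^ j) * z ^ i)"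
    by (simp add: coeff_p poly_eq_sum_upto[OF bidegree_le_degree_coeff[OF assms]] bcoeff_def)
  finally show ?thesis
    by (simp add: sum_distrib_left sum_distrib_right mult_ac)
qed

section \<open>The slash action\<close>

lemma cst_add: "cst (x + y) = cst x + cst y"
  by (simp add: cst_def)

lemma cst_minus: "cst (- x) = - cst x"
  by (simp add: cst_def)

lemma cst_1: "cst 1 = 1"
  by (simp add: cst_def one_pCons)

lemma slash_zero [simp]: "slash k 0 g = 0"
  by (cases g) (simp add: bcoeff_def cst_def)

lemma slash_add: "slash k (P + R) g = slash k P g + slash k R g"
  by (cases g) (simp add: bcoeff_def cst_add distrib_right sum.distrib)

lemma slash_sum: "slash k (sum F S) g = (\<Sum>x\<in>S. slash k (F x) g)"
  by (induction S rule: infinite_finite_induct) (auto simp: slash_add)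

lemma eval2_slash_fractional:
  assumes "P \<in> Vkk k" and nonzero: "c * z + e \<noteq> 0" "cnj c * w + cnj e \<noteq> 0"
  shows "eval2 (slash k P (a, b, c, e)) z w =
     (c * z + e) ^ k * (cnj c * w + cnj e) ^ k *
       eval2 P ((a * z + b) / (c * z + e)) ((cnj a * w + cnj b) / (cnj c * w + cnj e))"
proof -
  have split_power: "x ^ i * y ^ (k - i) = y ^ k * (x / y) ^ i" if "i \<le> k" "y \<noteq> 0" for x y :: complex and i
  proof -
    have "y ^ k = y ^ i * y ^ (k - i)" using \<open>i \<le> k\<close> by (simp add: power_add[symmetric])
    then show ?thesis using \<open>y \<noteq> 0\<close> by (simp add: power_divide field_simps)
  qed
  let ?u = "c * z + e" and ?v = "cnj c * w + cnj e"
  have "eval2 (slash k P (a, b, c, e)) z w =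
     (\<Sum>i\<le>k. \<Sum>j\<le>k. bcoeff P i j * ((a * z + b) ^ i * ?u ^ (k - i))
        * ((cnj a * w + cnj b) ^ j * ?v ^ (k - j)))"
    by (simp add: mult.assoc)
  also have "\<dots> = (\<Sum>i\<le>k. \<Sum>j\<le>k. ?u ^ k * ?v ^ k *
        (bcoeff P i j * ((a * z + b) / ?u) ^ i * ((cnj a * w + cnj b) / ?v) ^ j))"
    by (intro sum.cong refl) (simp add: split_power nonzero)
  also have "\<dots> = ?u ^ k * ?v ^ k * eval2 P ((a * z + b) / ?u) ((cnj a * w + cnj b) / ?v)"
    by (simp add: eval2_eq_sum_bcoeff[OF assms(1)[unfolded Vkk_iff_bidegree_le]] sum_distrib_left)
  finally show ?thesis .
qed

lemma slash_Imat: "P \<in> Vkk k \<Longrightarrow> slash k P Imat = P"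
  by (rule bipoly_eqI_eval2[of "{}" "{}"])
    (simp_all add: Imat_def eval2_eq_sum_bcoeff Vkk_iff_bidegree_le)


section \<open>Gaussian integers\<close>

lemma gauss_ints_iff: "z \<in> gauss_ints \<longleftrightarrow> Re z \<in> \<int> \<and> Im z \<in> \<int>"
  by (simp add: gauss_ints_def)

lemma gauss_ints_add [intro]: "x \<in> gauss_ints \<Longrightarrow> y \<in> gauss_ints \<Longrightarrow> x + y \<in> gauss_ints"
  by (simp add: gauss_ints_iff)

lemma gauss_ints_diff [intro]: "x \<in> gauss_ints \<Longrightarrow> y \<in> gauss_ints \<Longrightarrow> x - y \<in> gauss_ints"
  by (simp add: gauss_ints_iff)

lemma gauss_ints_minus_iff [simp]: "- x \<in> gauss_ints \<longleftrightarrow> x \<in> gauss_ints"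
  by (simp add: gauss_ints_iff)

lemma gauss_ints_mult [intro]: "x \<in> gauss_ints \<Longrightarrow> y \<in> gauss_ints \<Longrightarrow> x * y \<in> gauss_ints"
  by (simp add: gauss_ints_iff)

lemma gauss_ints_cnj [intro]: "x \<in> gauss_ints \<Longrightarrow> cnj x \<in> gauss_ints"
  by (simp add: gauss_ints_iff)

lemma gauss_ints_0 [simp, intro]: "0 \<in> gauss_ints"
  and gauss_ints_1 [simp, intro]: "1 \<in> gauss_ints"
  and gauss_ints_ii [simp, intro]: "\<i> \<in> gauss_ints"
  and gauss_ints_of_int [simp, intro]: "of_int n \<in> gauss_ints"
  by (simp_all add: gauss_ints_iff)

lemma Ints_subset_gauss_ints [intro]: "x \<in> \<int> \<Longrightarrow> x \<in> gauss_ints"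
  by (auto elim!: Ints_cases)

lemma gauss_ints_real_imp_Ints: "x \<in> gauss_ints \<Longrightarrow> Im x = 0 \<Longrightarrow> x \<in> \<int>"
  by (auto simp: gauss_ints_iff complex_is_Int_iff elim!: Ints_cases)

lemma gauss_ints_norm_Ints: "x \<in> gauss_ints \<Longrightarrow> x * cnj x \<in> \<int>"
  by (rule gauss_ints_real_imp_Ints) auto

lemma gauss_ints_trace_Ints: "x \<in> gauss_ints \<Longrightarrow> x + cnj x \<in> \<int>"
  by (rule gauss_ints_real_imp_Ints) auto

lemma cnj_Ints: "x \<in> (\<int> :: complex set) \<Longrightarrow> cnj x = x"
  by (auto elim!: Ints_cases)

lemma gauss_ints_cases:
  assumes "z \<in> gauss_ints"
  obtains x y :: int where "z = Complex (of_int x) (of_int y)"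
  using assms by (auto simp: gauss_ints_iff complex_eq_iff elim!: Ints_cases)

lemma gauss_ints_euclidean:
  assumes "a \<in> gauss_ints" and "c \<noteq> 0"
  shows "\<exists>q \<in> gauss_ints. cmod (a - q * c) < cmod c"
proof -
  define x where "x = a / c"
  define q where "q = Complex (of_int (round (Re x))) (of_int (round (Im x)))"
  have "\<bar>Re (x - q)\<bar> \<le> \<bar>1/2\<bar>" "\<bar>Im (x - q)\<bar> \<le> \<bar>1/2\<bar>"
    using of_int_round_abs_le[of "Re x"] of_int_round_abs_le[of "Im x"]
    by (auto simp: q_def abs_minus_commute)
  then have "(Re (x - q))\<^sup>2 \<le> (1/2)\<^sup>2" "(Im (x - q))\<^sup>2 \<le> (1/2)\<^sup>2"
    by (simp_all only: abs_le_square_iff)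
  then have "cmod (x - q) < 1"
    by (simp add: cmod_def power_divide)
  moreover have "a - q * c = c * (x - q)"
    using \<open>c \<noteq> 0\<close> by (simp add: x_def field_simps)
  ultimately have "cmod (a - q * c) < cmod c"
    using \<open>c \<noteq> 0\<close> by (simp add: norm_mult)
  moreover have "q \<in> gauss_ints"
    by (simp add: q_def gauss_ints_iff)
  ultimately show ?thesis by blast
qed

definition gauss_norm :: "complex \<Rightarrow> nat" where
  "gauss_norm z = nat \<lfloor>(cmod z)\<^sup>2\<rfloor>"

lemma of_nat_gauss_norm:
  assumes "z \<in> gauss_ints"
  shows "real (gauss_norm z) = (cmod z)\<^sup>2"
proof -
  obtain x y where "z = Complex (of_int x) (of_int y)"
    using assms by (rule gauss_ints_cases)
  then have "(cmod z)\<^sup>2 = of_int (x\<^sup>2 + y\<^sup>2)"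
    by (simp add: cmod_power2)
  then show ?thesis by (simp add: gauss_norm_def)
qed

lemma gauss_norm_less:
  assumes "z \<in> gauss_ints" "y \<in> gauss_ints" "cmod z < cmod y"
  shows "gauss_norm z < gauss_norm y"
proof -
  have "(cmod z)\<^sup>2 < (cmod y)\<^sup>2"
    using assms(3) by (simp add: power_strict_mono)
  then show ?thesis
    using of_nat_gauss_norm[OF assms(1)] of_nat_gauss_norm[OF assms(2)] by simp
qed

lemma gauss_ints_unit:
  assumes "a \<in> gauss_ints" "e \<in> gauss_ints" "a * e = 1"
  shows "a = 1 \<or> a = -1 \<or> a = \<i> \<or> a = - \<i>"
proof -
  have "cmod a * cmod e = 1"
    using arg_cong[OF assms(3), of cmod] by (simp add: norm_mult)
  then have "real (gauss_norm a * gauss_norm e) = 1"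
    using of_nat_gauss_norm[OF assms(1)] of_nat_gauss_norm[OF assms(2)]
    by (metis of_nat_mult one_power2 power_mult_distrib)
  then have "gauss_norm a = 1"
    by (metis of_nat_eq_1_iff nat_mult_eq_1_iff)
  moreover obtain x y where a: "a = Complex (of_int x) (of_int y)"
    using assms(1) by (rule gauss_ints_cases)
  ultimately have "real_of_int (x\<^sup>2 + y\<^sup>2) = 1"
    using of_nat_gauss_norm[OF assms(1)] by (simp add: cmod_power2)
  then have "x\<^sup>2 + y\<^sup>2 = 1"
    by (simp only: of_int_eq_1_iff)
  then have "x\<^sup>2 \<le> 1" "y\<^sup>2 \<le> 1"
    using zero_le_power2[of x] zero_le_power2[of y] by linarith+
  then have "\<bar>x\<bar> \<le> 1" "\<bar>y\<bar> \<le> 1"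
    using abs_le_square_iff[of x 1] abs_le_square_iff[of y 1] by simp_all
  then have "x \<in> {-1, 0, 1}" "y \<in> {-1, 0, 1}"
    by auto
  then show ?thesis
    using \<open>x\<^sup>2 + y\<^sup>2 = 1\<close> by (auto simp: a complex_eq_iff)
qed

text \<open>
  Davenport--Cassels descent: if \<open>\<Delta> = |M / q|\<^sup>2\<close> is a norm from \<open>\<rat>(i)\<close>, round \<open>M / q\<close>
  to \<open>t\<close> and put \<open>r = M - t q\<close>; the identity below gives \<open>|M'|\<^sup>2 = \<Delta> |r|\<^sup>2\<close> for
  \<open>M' = t cnj r + (|t|\<^sup>2 - \<Delta>) cnj q\<close>, and \<open>|r| < |q|\<close>.
\<close>

lemma descent_identity:
  fixes t q r D :: complex
  assumes "cnj D = D"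
  shows "(t * cnj r + (t * cnj t - D) * cnj q) * cnj (t * cnj r + (t * cnj t - D) * cnj q) - D * (cnj r * r)
     = (t * cnj t - D) * ((t * q + r) * cnj (t * q + r) - D * (q * cnj q))"
  using assms by (simp add: algebra_simps)

lemma gauss_norm_descent:
  assumes "M \<in> gauss_ints" "q \<in> gauss_ints" "q \<noteq> 0"
    and "M * cnj M = of_int \<Delta> * (q * cnj q)"
  shows "\<exists>\<beta>\<in>gauss_ints. of_int \<Delta> = \<beta> * cnj \<beta>"
  using assms
proof (induction "gauss_norm q" arbitrary: M q rule: less_induct)
  case less
  obtain t where t: "t \<in> gauss_ints" "cmod (M - t * q) < cmod q"
    using gauss_ints_euclidean[OF less.prems(1,3)] by blast
  define r where "r = M - t * q"
  have M: "M = t * q + r" and r: "r \<in> gauss_ints"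
    using less.prems t by (auto simp: r_def)
  show ?case
  proof (cases "r = 0")
    case True
    then have "(t * cnj t) * (q * cnj q) = of_int \<Delta> * (q * cnj q)"
      using less.prems(4) M by (simp add: algebra_simps)
    then have "of_int \<Delta> = t * cnj t"
      using less.prems(3) by simp
    with t show ?thesis by blast
  next
    case False
    define M' where "M' = t * cnj r + (t * cnj t - of_int \<Delta>) * cnj q"
    have "M' \<in> gauss_ints"
      unfolding M'_def using t(1) r less.prems(2) by blast
    moreover have "M' * cnj M' = of_int \<Delta> * (cnj r * cnj (cnj r))"
      using descent_identity[of "of_int \<Delta>" t r q] less.prems(4) M by (simp add: M'_def)
    moreover have "gauss_norm (cnj r) < gauss_norm q"
      using t(2) r less.prems(2) by (intro gauss_norm_less) (auto simp: r_def[symmetric])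
    ultimately show ?thesis
      using less.hyps r False by blast
  qed
qed

section \<open>The group \<open>SL\<^sub>2(\<int>[i])\<close>\<close>

text \<open>\<open>minv\<close> is the adjugate; it is the inverse only for matrices of determinant \<open>1\<close>.\<close>

fun minv :: "mat2 \<Rightarrow> mat2" where
  "minv (a, b, c, e) = (e, - b, - c, a)"

fun mvec :: "mat2 \<Rightarrow> complex \<times> complex \<Rightarrow> complex \<times> complex" where
  "mvec (a, b, c, e) (p, q) = (a * p + b * q, c * p + e * q)"

definition Tq :: "complex \<Rightarrow> mat2" where
  "Tq q = (1, q, 0, 1)"

lemma SL2Zi_mmul:
  assumes "g \<in> SL2Zi" "h \<in> SL2Zi"
  shows "mmul g h \<in> SL2Zi"
proof -
  obtain a b c e a' b' c' e' where "g = (a, b, c, e)" "h = (a', b', c', e')"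
    by (cases g, cases h) auto
  moreover have "(a * a' + b * c') * (c * b' + e * e') - (a * b' + b * e') * (c * a' + e * c')
      = (a * e - b * c) * (a' * e' - b' * c')"
    by (simp add: algebra_simps)
  ultimately show ?thesis
    using assms by (auto simp: SL2Zi_def)
qed

lemma SL2Zi_minv: "g \<in> SL2Zi \<Longrightarrow> minv g \<in> SL2Zi"
  by (cases g) (auto simp: SL2Zi_def algebra_simps)

lemma SL2Zi_mneg: "g \<in> SL2Zi \<Longrightarrow> mneg g \<in> SL2Zi"
  by (cases g) (auto simp: SL2Zi_def)

lemma SL2Zi_Tq: "q \<in> gauss_ints \<Longrightarrow> Tq q \<in> SL2Zi"
  by (simp add: Tq_def SL2Zi_def)

lemma SL2Zi_generators: "Imat \<in> SL2Zi" "Smat \<in> SL2Zi" "Tmat \<in> SL2Zi" "Twmat \<in> SL2Zi" "Lmat \<in> SL2Zi"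
  by (simp_all add: SL2Zi_def Imat_def Smat_def Tmat_def Twmat_def Lmat_def)

lemma mmul_minv_left: "g \<in> SL2Zi \<Longrightarrow> mmul (minv g) g = Imat"
  by (cases g) (auto simp: SL2Zi_def Imat_def algebra_simps)

lemma mmul_minv_right: "g \<in> SL2Zi \<Longrightarrow> mmul g (minv g) = Imat"
  by (cases g) (auto simp: SL2Zi_def Imat_def algebra_simps)

lemma minv_mmul: "minv (mmul g h) = mmul (minv h) (minv g)"
  by (cases g; cases h) (simp add: algebra_simps)

lemma minv_mneg: "minv (mneg g) = mneg (minv g)"
  by (cases g) simp

lemma mvec_mmul: "mvec (mmul g h) v = mvec g (mvec h v)"
  by (cases g; cases h; cases v) (simp add: algebra_simps)

lemma mvec_Imat [simp]: "mvec Imat v = v"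
  by (cases v) (simp add: Imat_def)

lemma mvec_mneg: "mvec (mneg g) (p, q) = (- fst (mvec g (p, q)), - snd (mvec g (p, q)))"
  by (cases g) simp

lemma mvec_minv_e1_SL2Zi:
  assumes "g \<in> SL2Zi"
  shows "fst (mvec (minv g) (1, 0)) \<in> gauss_ints" "snd (mvec (minv g) (1, 0)) \<in> gauss_ints"
    and "mvec (minv g) (1, 0) \<noteq> (0, 0)"
  using assms by (cases g; auto simp: SL2Zi_def)+

lemma Tq_add: "mmul (Tq x) (Tq y) = Tq (x + y)"
  by (simp add: Tq_def)


section \<open>Integral binary hermitian forms\<close>

text \<open>
  A form \<open>(A, B, C)\<close> keeps its integer coefficients \<open>A\<close> and \<open>C\<close> as complex numbers, so that
  all computations take place in \<open>\<complex>\<close>.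
\<close>

type_synonym hform = "complex \<times> complex \<times> complex"

fun hval :: "hform \<Rightarrow> complex \<times> complex \<Rightarrow> complex" where
  "hval (A, B, C) (p, q) = A * p * cnj p + B * p * cnj q + cnj B * cnj p * q + C * q * cnj q"

fun hdisc :: "hform \<Rightarrow> complex" where
  "hdisc (A, B, C) = B * cnj B - A * C"

definition hforms :: "int \<Rightarrow> hform set" where
  "hforms \<Delta> = {(A, B, C). A \<in> \<int> \<and> B \<in> gauss_ints \<and> C \<in> \<int> \<and> hdisc (A, B, C) = of_int \<Delta>}"

fun hact :: "hform \<Rightarrow> mat2 \<Rightarrow> hform" where
  "hact (A, B, C) (a, b, c, e) =
     (hval (A, B, C) (a, c), A * a * cnj b + B * a * cnj e + cnj B * c * cnj b + C * c * cnj e,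
      hval (A, B, C) (b, e))"

fun hneg :: "hform \<Rightarrow> hform" where
  "hneg (A, B, C) = (- A, - B, - C)"

text \<open>\<open>hpoly Q\<close> is \<open>Q(z, 1)\<close> with \<open>cnj z\<close> replaced by the second variable \<open>Wv\<close>.\<close>

definition hpoly :: "hform \<Rightarrow> bipoly" where
  "hpoly Q = (case Q of (A, B, C) \<Rightarrow> cst A * Zv * Wv + cst B * Zv + cst (cnj B) * Wv + cst C)"

lemma hforms_real: "(A, B, C) \<in> hforms \<Delta> \<Longrightarrow> cnj A = A \<and> cnj C = C"
  by (auto simp: hforms_def cnj_Ints)

lemma hval_hact:
  assumes "Q \<in> hforms \<Delta>"
  shows "hval (hact Q g) v = hval Q (mvec g v)"
proof -
  obtain A B C where Q: "Q = (A, B, C)" by (cases Q)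
  have "cnj A = A" "cnj C = C" using assms hforms_real[of A B C] by (simp_all add: Q)
  then show ?thesis by (cases g; cases v) (simp add: Q algebra_simps)
qed

lemma hact_mmul:
  assumes "Q \<in> hforms \<Delta>"
  shows "hact (hact Q g) h = hact Q (mmul g h)"
proof -
  obtain A B C where Q: "Q = (A, B, C)" by (cases Q)
  have "cnj A = A" "cnj C = C" using assms hforms_real[of A B C] by (simp_all add: Q)
  then show ?thesis by (cases g; cases h) (simp add: Q algebra_simps)
qed

lemma hact_Imat [simp]: "hact Q Imat = Q"
  by (cases Q) (simp add: Imat_def)

lemma hdisc_hact:
  assumes "cnj A = A" "cnj C = C"
  shows "hdisc (hact (A, B, C) (a, b, c, e)) = (a * e - b * c) * cnj (a * e - b * c) * hdisc (A, B, C)"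
  using assms by (simp add: algebra_simps)

lemma hval_Ints:
  assumes "Q \<in> hforms \<Delta>" "p \<in> gauss_ints" "q \<in> gauss_ints"
  shows "hval Q (p, q) \<in> \<int>"
proof -
  obtain A B C where Q: "Q = (A, B, C)" by (cases Q)
  have X: "A \<in> \<int>" "B \<in> gauss_ints" "C \<in> \<int>" using assms(1) by (auto simp: Q hforms_def)
  have "A * (p * cnj p) \<in> \<int>" "C * (q * cnj q) \<in> \<int>"
    using X(1,3) gauss_ints_norm_Ints[OF assms(2)] gauss_ints_norm_Ints[OF assms(3)] by (auto intro: Ints_mult)
  moreover have "B * p * cnj q + cnj (B * p * cnj q) \<in> \<int>"
    using X(2) assms(2,3) by (intro gauss_ints_trace_Ints) blast
  moreover have "hval Q (p, q) = A * (p * cnj p) + (B * p * cnj q + cnj (B * p * cnj q)) + C * (q * cnj q)"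
    by (simp add: Q algebra_simps)
  ultimately show ?thesis
    by (simp add: Ints_add)
qed

lemma hact_hforms:
  assumes Q: "Q \<in> hforms \<Delta>" and g: "g \<in> SL2Zi"
  shows "hact Q g \<in> hforms \<Delta>"
proof -
  obtain A B C a b c e where Qg: "Q = (A, B, C)" "g = (a, b, c, e)" by (cases Q, cases g)
  have G: "a \<in> gauss_ints" "b \<in> gauss_ints" "c \<in> gauss_ints" "e \<in> gauss_ints" "a * e - b * c = 1"
    using g by (auto simp: SL2Zi_def Qg)
  have X: "A \<in> \<int>" "B \<in> gauss_ints" "C \<in> \<int>" "hdisc (A, B, C) = of_int \<Delta>"
    using Q by (auto simp: hforms_def Qg)
  have "A * a * cnj b + B * a * cnj e + cnj B * c * cnj b + C * c * cnj e \<in> gauss_ints"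
    using G X by (intro gauss_ints_add gauss_ints_mult gauss_ints_cnj) auto
  moreover have "hval Q (a, c) \<in> \<int>" "hval Q (b, e) \<in> \<int>"
    using hval_Ints[OF Q] G by auto
  moreover have "hdisc (hact Q g) = of_int \<Delta>"
    using hdisc_hact[of A C B a b c e] hforms_real[of A B C \<Delta>] Q G(5) X(4) by (simp add: Qg)
  ultimately show ?thesis
    by (simp add: hforms_def Qg del: hval.simps hdisc.simps)
qed

lemma inj_on_hact:
  assumes "g \<in> SL2Zi"
  shows "inj_on (\<lambda>Q. hact Q g) (hforms \<Delta>)"
proof (rule inj_onI)
  fix Q R assume "Q \<in> hforms \<Delta>" "R \<in> hforms \<Delta>" "hact Q g = hact R g"
  then have "hact (hact Q g) (minv g) = hact (hact R g) (minv g)" by simp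
  then show "Q = R"
    using \<open>Q \<in> hforms \<Delta>\<close> \<open>R \<in> hforms \<Delta>\<close> by (simp add: hact_mmul mmul_minv_right[OF assms])
qed

lemma hval_completed_square:
  assumes "(A, B, C) \<in> hforms \<Delta>"
  shows "A * hval (A, B, C) (p, q) = (A * p + cnj B * q) * cnj (A * p + cnj B * q) - of_int \<Delta> * (q * cnj q)"
proof -
  have "cnj A = A" and disc: "B * cnj B - A * C = of_int \<Delta>"
    using hforms_real[OF assms] assms by (auto simp: hforms_def)
  have "(A * p + cnj B * q) * cnj (A * p + cnj B * q) - (B * cnj B - A * C) * (q * cnj q)
      = A * hval (A, B, C) (p, q)"
    using \<open>cnj A = A\<close> by (simp add: algebra_simps)
  then show ?thesis
    by (simp add: disc)
qed

lemma Re_hval_nonzero: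
  assumes Q: "Q \<in> hforms \<Delta>" and not_norm: "\<not> (\<exists>\<beta> \<in> gauss_ints. of_int \<Delta> = \<beta> * cnj \<beta>)"
    and "p \<in> gauss_ints" "q \<in> gauss_ints" "(p, q) \<noteq> (0, 0)"
  shows "Re (hval Q (p, q)) \<noteq> 0"
proof
  assume "Re (hval Q (p, q)) = 0"
  moreover have "Im (hval Q (p, q)) = 0"
    using hval_Ints[OF Q assms(3,4)] by (auto elim!: Ints_cases)
  ultimately have zero: "hval Q (p, q) = 0"
    by (simp add: complex_eq_iff)
  obtain A B C where QABC: "Q = (A, B, C)" by (cases Q)
  have X: "A \<in> \<int>" "B \<in> gauss_ints" "hdisc Q = of_int \<Delta>"
    using Q by (auto simp: hforms_def QABC)
  have "A \<noteq> 0"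
    using X(2,3) not_norm by (auto simp: QABC)
  show False
  proof (cases "q = 0")
    case True
    then show False using zero \<open>A \<noteq> 0\<close> assms(5) by (simp add: QABC)
  next
    case False
    let ?M = "A * p + cnj B * q"
    have "?M * cnj ?M = of_int \<Delta> * (q * cnj q)"
      using hval_completed_square[of A B C \<Delta> p q] Q zero by (simp add: QABC)
    moreover have "?M \<in> gauss_ints"
      using X assms(3,4) by blast
    ultimately show False
      using gauss_norm_descent[OF _ assms(4) False] not_norm by blast
  qed
qed

lemma hneg_hforms: "Q \<in> hforms \<Delta> \<Longrightarrow> hneg Q \<in> hforms \<Delta>"
  by (cases Q) (auto simp: hforms_def)

lemma hval_hneg: "hval (hneg Q) v = - hval Q v"
  by (cases Q; cases v) (simp add: algebra_simps)

lemma hneg_hneg [simp]: "hneg (hneg Q) = Q"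
  by (cases Q) simp

lemma hpoly_hneg: "hpoly (hneg Q) = - hpoly Q"
  by (cases Q) (simp add: hpoly_def cst_minus algebra_simps)

lemma bidegree_le_hpoly: "bidegree_le (hpoly Q) 1 1"
proof -
  have "bidegree_le (cst A * Zv * Wv) 1 1" for A
    using bidegree_le_mult[OF bidegree_le_mult[OF bidegree_le_cst bidegree_le_Zv] bidegree_le_Wv] by simp
  moreover have "bidegree_le (cst B * Zv) 1 1" "bidegree_le (cst B * Wv) 1 1" "bidegree_le (cst B) 1 1" for B
    using bidegree_le_mult[OF bidegree_le_cst bidegree_le_Zv, of B]
      bidegree_le_mult[OF bidegree_le_cst bidegree_le_Wv, of B] bidegree_le_cst[of B]
    by (auto elim: bidegree_le_mono)
  ultimately show ?thesis
    by (cases Q) (simp add: hpoly_def bidegree_le_add)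
qed

lemma hpoly_power_Vkk: "hpoly Q ^ k \<in> Vkk k"
  using bidegree_le_power[OF bidegree_le_hpoly, of Q k] by (simp add: Vkk_iff_bidegree_le)

lemma eval2_hpoly [simp]: "eval2 (hpoly (A, B, C)) z w = A * z * w + B * z + cnj B * w + C"
  by (simp add: hpoly_def)

lemma finite_linear_zeros:
  fixes c e :: complex
  assumes "(c, e) \<noteq> (0, 0)"
  shows "finite {z. c * z + e = 0}"
proof (cases "c = 0")
  case False
  then have "{z. c * z + e = 0} = {- e / c}"
    by (auto simp: field_simps add_eq_0_iff)
  then show ?thesis by simp
qed (use assms in simp)

lemma slash_hpoly_power:
  assumes "cnj A = A" "cnj C = C" and "(c, e) \<noteq> (0, 0)"
  shows "slash k (hpoly (A, B, C) ^ k) (a, b, c, e) = hpoly (hact (A, B, C) (a, b, c, e)) ^ k"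
proof (rule bipoly_eqI_eval2)
  show "finite {z. c * z + e = 0}" "finite {w. cnj c * w + cnj e = 0}"
    using assms(3) by (auto intro: finite_linear_zeros)
next
  fix z w assume "z \<notin> {z. c * z + e = 0}" "w \<notin> {w. cnj c * w + cnj e = 0}"
  then have u: "c * z + e \<noteq> 0" and v: "cnj c * w + cnj e \<noteq> 0" by auto
  let ?x = "a * z + b" and ?u = "c * z + e" and ?y = "cnj a * w + cnj b" and ?v = "cnj c * w + cnj e"
  have "eval2 (slash k (hpoly (A, B, C) ^ k) (a, b, c, e)) z w
      = (?u * ?v * (A * (?x / ?u) * (?y / ?v) + B * (?x / ?u) + cnj B * (?y / ?v) + C)) ^ k"
    by (subst eval2_slash_fractional[OF hpoly_power_Vkk u v]) (simp add: power_mult_distrib)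
  also have "?u * ?v * (A * (?x / ?u) * (?y / ?v) + B * (?x / ?u) + cnj B * (?y / ?v) + C)
      = A * ?x * ?y + B * ?x * ?v + cnj B * ?u * ?y + C * ?u * ?v"
  proof -
    have "u' * v' * (A * (x / u') * (y / v') + B * (x / u') + B' * (y / v') + C)
        = A * x * y + B * x * v' + B' * u' * y + C * u' * v'"
      if "u' \<noteq> 0" "v' \<noteq> 0" for u' v' x y B' :: complex
      using that by (simp add: field_simps)
    then show ?thesis using u v by blast
  qed
  also have "\<dots> = eval2 (hpoly (hact (A, B, C) (a, b, c, e))) z w"
    using assms(1,2) by (simp add: algebra_simps)
  finally show "eval2 (slash k (hpoly (A, B, C) ^ k) (a, b, c, e)) z w
      = eval2 (hpoly (hact (A, B, C) (a, b, c, e)) ^ k) z w"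
    by simp
qed


section \<open>Forms separating two vectors\<close>

definition separating :: "int \<Rightarrow> complex \<times> complex \<Rightarrow> complex \<times> complex \<Rightarrow> hform set" where
  "separating \<Delta> u v = {Q \<in> hforms \<Delta>. 0 < Re (hval Q u) \<and> Re (hval Q v) < 0}"

lemma finite_gauss_ints_cball: "finite {z \<in> gauss_ints. cmod z \<le> r}"
proof -
  define K where "K = \<lceil>r\<rceil>"
  have "{z \<in> gauss_ints. cmod z \<le> r} \<subseteq> (\<lambda>(x, y). Complex (of_int x) (of_int y)) ` ({-K..K} \<times> {-K..K})"
  proof
    fix z assume z: "z \<in> {z \<in> gauss_ints. cmod z \<le> r}"
    then obtain x y where xy: "z = Complex (of_int x) (of_int y)"
      by (auto elim: gauss_ints_cases)
    have "\<bar>Re z\<bar> \<le> r" "\<bar>Im z\<bar> \<le> r"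
      using z abs_Re_le_cmod[of z] abs_Im_le_cmod[of z] by auto
    then have "\<bar>x\<bar> \<le> K" "\<bar>y\<bar> \<le> K"
      by (auto simp: K_def xy le_ceiling_iff)
    then show "z \<in> (\<lambda>(x, y). Complex (of_int x) (of_int y)) ` ({-K..K} \<times> {-K..K})"
      by (auto simp: xy abs_le_iff)
  qed
  then show ?thesis by (rule finite_subset) auto
qed

lemma separating_bound:
  assumes Q: "(A, B, C) \<in> separating \<Delta> (1, 0) (p, q)" and "p \<in> gauss_ints" "q \<in> gauss_ints"
  shows "(cmod (A * p + cnj B * q))\<^sup>2 + cmod A \<le> of_int \<Delta> * (cmod q)\<^sup>2"
proof -
  let ?M = "A * p + cnj B * q"
  have X: "(A, B, C) \<in> hforms \<Delta>" and pos: "0 < Re A" and neg: "Re (hval (A, B, C) (p, q)) < 0"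
    using Q by (simp_all add: separating_def)
  obtain a where a: "A = of_int a"
    using X by (auto simp: hforms_def elim: Ints_cases)
  obtain s where s: "hval (A, B, C) (p, q) = of_int s"
    using hval_Ints[OF X assms(2,3)] by (auto elim: Ints_cases)
  have "0 < a"
    using pos by (simp add: a)
  have "s < 0"
    using neg by (simp add: s del: hval.simps)
  have "a * s \<le> - a"
    using \<open>0 < a\<close> \<open>s < 0\<close> mult_left_mono[of s "-1" a] by simp
  then have "real_of_int (a * s) \<le> - cmod A"
    using \<open>0 < a\<close> by (simp add: a flip: of_int_mult of_int_minus)
  moreover have "complex_of_int (a * s) = ?M * cnj ?M - of_int \<Delta> * (q * cnj q)"
    using hval_completed_square[OF X, of p q] unfolding s by (simp only: a of_int_mult)
  then have "complex_of_real (of_int (a * s)) = of_real ((cmod ?M)\<^sup>2 - of_int \<Delta> * (cmod q)\<^sup>2)"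
    by (simp only: of_real_diff of_real_mult complex_norm_square of_real_of_int_eq)
  then have "real_of_int (a * s) = (cmod ?M)\<^sup>2 - of_int \<Delta> * (cmod q)\<^sup>2"
    by (simp only: of_real_eq_iff)
  ultimately show ?thesis
    by linarith
qed

lemma finite_separating:
  assumes p: "p \<in> gauss_ints" and q: "q \<in> gauss_ints"
  shows "finite (separating \<Delta> (1, 0) (p, q))"
proof -
  define D where "D = of_int \<Delta> * (cmod q)\<^sup>2"
  define R where "R = (sqrt D + D * cmod p) / cmod q"
  define G where "G r = {z \<in> gauss_ints. cmod z \<le> r}" for r
  have "separating \<Delta> (1, 0) (p, q) \<subseteq> G D \<times> G R \<times> G (R\<^sup>2 + \<bar>of_int \<Delta>\<bar>)"
  proof
    fix Q assume Q: "Q \<in> separating \<Delta> (1, 0) (p, q)"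
    obtain A B C where QABC: "Q = (A, B, C)" by (cases Q)
    let ?M = "A * p + cnj B * q"
    have bound: "(cmod ?M)\<^sup>2 + cmod A \<le> D"
      using separating_bound[OF Q[unfolded QABC] p q] by (simp add: D_def)
    have X: "A \<in> \<int>" "B \<in> gauss_ints" "C \<in> \<int>" "B * cnj B - A * C = of_int \<Delta>" "0 < Re A"
      using Q by (auto simp: QABC separating_def hforms_def)
    have "1 \<le> cmod A"
      using X(1,5) by (auto elim!: Ints_cases)
    have "cmod A \<le> D"
      using bound zero_le_power2[of "cmod ?M"] by linarith
    have "q \<noteq> 0"
    proof
      assume "q = 0"
      with bound have "(cmod ?M)\<^sup>2 + cmod A \<le> 0"
        by (simp add: D_def)
      then show False
        using \<open>1 \<le> cmod A\<close> zero_le_power2[of "cmod ?M"] by linarith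
    qed
    have "cmod ?M \<le> sqrt D"
      using bound norm_ge_zero[of A] by (intro real_le_rsqrt) linarith
    have "cmod B * cmod q = cmod (?M - A * p)"
      by (simp add: norm_mult)
    also have "\<dots> \<le> cmod ?M + cmod A * cmod p"
      using norm_triangle_ineq4[of ?M "A * p"] by (simp add: norm_mult)
    also have "\<dots> \<le> sqrt D + D * cmod p"
      using \<open>cmod ?M \<le> sqrt D\<close> \<open>cmod A \<le> D\<close> mult_right_mono[of "cmod A" D "cmod p"] by simp
    finally have B: "cmod B \<le> R"
      using \<open>q \<noteq> 0\<close> by (simp add: R_def pos_le_divide_eq)
    have "cmod C \<le> cmod A * cmod C"
      using \<open>1 \<le> cmod A\<close> mult_right_mono[of 1 "cmod A" "cmod C"] by simp
    also have "\<dots> = cmod (B * cnj B - of_int \<Delta>)"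
      using X(4) by (simp add: norm_mult algebra_simps flip: X(4))
    also have "\<dots> \<le> (cmod B)\<^sup>2 + \<bar>of_int \<Delta>\<bar>"
      using norm_triangle_ineq4[of "B * cnj B" "of_int \<Delta>"] by (simp add: norm_mult power2_eq_square)
    also have "\<dots> \<le> R\<^sup>2 + \<bar>of_int \<Delta>\<bar>"
      using B by (simp add: power_mono)
    finally have "cmod C \<le> R\<^sup>2 + \<bar>of_int \<Delta>\<bar>" .
    then show "Q \<in> G D \<times> G R \<times> G (R\<^sup>2 + \<bar>of_int \<Delta>\<bar>)"
      using X B \<open>cmod A \<le> D\<close> by (auto simp: G_def QABC)
  qed
  moreover have "finite (G D \<times> G R \<times> G (R\<^sup>2 + \<bar>of_int \<Delta>\<bar>))"
    by (simp add: G_def finite_gauss_ints_cball)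
  ultimately show ?thesis by (rule finite_subset)
qed

text \<open>
  Split each set according to the sign at the third vector: what remains of \<open>S(v, w)\<close>
  after removing the forms positive at \<open>u\<close> is the negative of what remains of \<open>S(u, v)\<close>
  after removing the forms negative at \<open>w\<close>.
\<close>

lemma sum_separating_split:
  fixes h :: "hform \<Rightarrow> 'a::ab_group_add"
  assumes nonzero: "\<And>Q x. Q \<in> hforms \<Delta> \<Longrightarrow> x \<in> {u, v, w} \<Longrightarrow> Re (hval Q x) \<noteq> 0"
    and finite: "finite (separating \<Delta> u v)" "finite (separating \<Delta> v w)" "finite (separating \<Delta> u w)"
    and odd: "\<And>Q. h (hneg Q) = - h Q"
  shows "sum h (separating \<Delta> u w) = sum h (separating \<Delta> u v) + sum h (separating \<Delta> v w)"
proof -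
  let ?pos = "\<lambda>x. {Q. 0 < Re (hval Q x)}" and ?neg = "\<lambda>x. {Q. Re (hval Q x) < 0}"
  have nz: "Re (hval Q x) \<noteq> 0" if "Q \<in> hforms \<Delta>" "x \<in> {u, v, w}" for Q x
    using nonzero that by blast
  have pos_iff: "0 < Re (hval Q x) \<longleftrightarrow> \<not> Re (hval Q x) < 0" if "Q \<in> hforms \<Delta>" "x \<in> {u, v, w}" for Q x
    using nonzero[OF that] by linarith
  have common: "separating \<Delta> u w \<inter> ?neg v = separating \<Delta> u v \<inter> ?neg w"
    by (auto simp: separating_def)
  have other: "separating \<Delta> u w - ?neg v = separating \<Delta> v w \<inter> ?pos u"
    by (auto simp: separating_def pos_iff)
  have cancel: "separating \<Delta> v w - ?pos u = hneg ` (separating \<Delta> u v - ?neg w)"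
  proof (intro equalityI subsetI)
    fix Q assume "Q \<in> separating \<Delta> v w - ?pos u"
    then have "hneg Q \<in> separating \<Delta> u v - ?neg w"
      using nz[of Q u] by (auto simp: separating_def hval_hneg hneg_hforms)
    then show "Q \<in> hneg ` (separating \<Delta> u v - ?neg w)"
      by (metis hneg_hneg image_eqI)
  next
    fix Q assume "Q \<in> hneg ` (separating \<Delta> u v - ?neg w)"
    then obtain Q0 where "Q0 \<in> separating \<Delta> u v - ?neg w" and "Q = hneg Q0"
      by blast
    then show "Q \<in> separating \<Delta> v w - ?pos u"
      using nz[of Q0 w] by (auto simp: separating_def hval_hneg hneg_hforms)
  qed
  have "inj_on hneg X" for X
    by (rule inj_onI) (metis hneg_hneg)
  then have "sum h (separating \<Delta> v w - ?pos u) = sum (h \<circ> hneg) (separating \<Delta> u v - ?neg w)"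
    unfolding cancel by (rule sum.reindex)
  also have "\<dots> = - sum h (separating \<Delta> u v - ?neg w)"
    by (simp add: odd sum_negf)
  finally have "sum h (separating \<Delta> v w - ?pos u) = - sum h (separating \<Delta> u v - ?neg w)" .
  then show ?thesis
    using sum.Int_Diff[OF finite(3), of h "?neg v"] sum.Int_Diff[OF finite(1), of h "?neg w"]
      sum.Int_Diff[OF finite(2), of h "?pos u"]
    by (simp add: common other)
qed

lemma hact_image_separating:
  assumes g: "g \<in> SL2Zi"
  shows "(\<lambda>Q. hact Q g) ` separating \<Delta> u v = separating \<Delta> (mvec (minv g) u) (mvec (minv g) v)"
proof (intro equalityI subsetI)
  have inverse: "mvec g (mvec (minv g) x) = x" for x
    by (simp flip: mvec_mmul add: mmul_minv_right[OF g])
  fix Q' assume "Q' \<in> (\<lambda>Q. hact Q g) ` separating \<Delta> u v"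
  then obtain Q where Q: "Q \<in> separating \<Delta> u v" and Q': "Q' = hact Q g" by blast
  then have "Q \<in> hforms \<Delta>" by (simp add: separating_def)
  then show "Q' \<in> separating \<Delta> (mvec (minv g) u) (mvec (minv g) v)"
    using Q hact_hforms[OF _ g] by (simp add: separating_def Q' hval_hact inverse del: hval.simps)
next
  fix Q' assume Q': "Q' \<in> separating \<Delta> (mvec (minv g) u) (mvec (minv g) v)"
  then have X: "Q' \<in> hforms \<Delta>" by (simp add: separating_def)
  define Q where "Q = hact Q' (minv g)"
  have "hact Q g = Q'"
    by (simp add: Q_def hact_mmul[OF X] mmul_minv_left[OF g])
  moreover have "Q \<in> separating \<Delta> u v"
    using Q' hact_hforms[OF X SL2Zi_minv[OF g]]
    by (simp add: separating_def Q_def hval_hact[OF X] del: hval.simps)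
  ultimately show "Q' \<in> (\<lambda>Q. hact Q g) ` separating \<Delta> u v" by blast
qed


section \<open>The cocycle\<close>

definition hcocycle :: "nat \<Rightarrow> int \<Rightarrow> mat2 \<Rightarrow> bipoly" where
  "hcocycle k \<Delta> g = (\<Sum>Q\<in>separating \<Delta> (1, 0) (mvec (minv g) (1, 0)). hpoly Q ^ k)"

lemma finite_separating_SL2Zi:
  "g \<in> SL2Zi \<Longrightarrow> finite (separating \<Delta> (1, 0) (mvec (minv g) (1, 0)))"
  using finite_separating[of "fst (mvec (minv g) (1, 0))" "snd (mvec (minv g) (1, 0))" \<Delta>]
    mvec_minv_e1_SL2Zi[of g] by simp

lemma slash_hcocycle:
  assumes g: "g \<in> SL2Zi" and h: "h \<in> SL2Zi"
  shows "slash k (hcocycle k \<Delta> g) h =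
    (\<Sum>Q\<in>separating \<Delta> (mvec (minv h) (1, 0)) (mvec (minv (mmul g h)) (1, 0)). hpoly Q ^ k)"
proof -
  let ?S = "separating \<Delta> (1, 0) (mvec (minv g) (1, 0))"
  have "slash k (hpoly Q ^ k) h = hpoly (hact Q h) ^ k" if "Q \<in> ?S" for Q
  proof -
    obtain A B C a b c e where Qh: "Q = (A, B, C)" "h = (a, b, c, e)"
      by (cases Q, cases h)
    have "cnj A = A" "cnj C = C"
      using that hforms_real[of A B C \<Delta>] by (simp_all add: separating_def Qh)
    moreover have "(c, e) \<noteq> (0, 0)"
      using h by (auto simp: SL2Zi_def Qh)
    ultimately show ?thesis
      unfolding Qh by (rule slash_hpoly_power)
  qed
  then have "slash k (hcocycle k \<Delta> g) h = (\<Sum>Q\<in>?S. hpoly (hact Q h) ^ k)"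
    by (simp add: hcocycle_def slash_sum)
  also have "\<dots> = (\<Sum>Q\<in>(\<lambda>Q. hact Q h) ` ?S. hpoly Q ^ k)"
    using inj_on_subset[OF inj_on_hact[OF h, of \<Delta>]]
    by (subst sum.reindex) (auto simp: separating_def)
  finally show ?thesis
    by (simp add: hact_image_separating[OF h] minv_mmul mvec_mmul)
qed

lemma hcocycle_mmul:
  assumes g: "g \<in> SL2Zi" and h: "h \<in> SL2Zi" and "odd k"
    and not_norm: "\<not> (\<exists>\<beta> \<in> gauss_ints. of_int \<Delta> = \<beta> * cnj \<beta>)"
  shows "hcocycle k \<Delta> (mmul g h) = slash k (hcocycle k \<Delta> g) h + hcocycle k \<Delta> h"
proof -
  let ?u = "mvec (minv h) (1, 0)" and ?w = "mvec (minv (mmul g h)) (1, 0)"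
  have gh: "mmul g h \<in> SL2Zi"
    using g h by (rule SL2Zi_mmul)
  have "Re (hval Q x) \<noteq> 0" if "Q \<in> hforms \<Delta>" "x \<in> {(1, 0), ?u, ?w}" for Q x
    using that mvec_minv_e1_SL2Zi[OF h] mvec_minv_e1_SL2Zi[OF gh]
      Re_hval_nonzero[OF that(1) not_norm, of "fst x" "snd x"] by auto
  moreover have "finite (separating \<Delta> ?u ?w)"
    using finite_imageI[OF finite_separating_SL2Zi[OF g], of "\<lambda>Q. hact Q h" \<Delta>]
    by (simp add: hact_image_separating[OF h] minv_mmul mvec_mmul)
  moreover have "hpoly (hneg Q) ^ k = - (hpoly Q ^ k)" for Q
    using \<open>odd k\<close> by (simp add: hpoly_hneg)
  ultimately have "hcocycle k \<Delta> (mmul g h) = hcocycle k \<Delta> h + (\<Sum>Q\<in>separating \<Delta> ?u ?w. hpoly Q ^ k)"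
    unfolding hcocycle_def
    by (intro sum_separating_split finite_separating_SL2Zi h gh) auto
  then show ?thesis
    by (simp add: slash_hcocycle[OF g h] add.commute)
qed

lemma hcocycle_mneg: "hcocycle k \<Delta> (mneg g) = hcocycle k \<Delta> g"
proof -
  have "hval Q (- p, - q) = hval Q (p, q)" for Q p q
    by (cases Q) simp
  then have "separating \<Delta> (1, 0) (mvec (minv (mneg g)) (1, 0)) = separating \<Delta> (1, 0) (mvec (minv g) (1, 0))"
    by (simp add: separating_def minv_mneg mvec_mneg del: hval.simps)
  then show ?thesis
    by (simp add: hcocycle_def)
qed

lemma hcocycle_Vkk: "hcocycle k \<Delta> g \<in> Vkk k"
  using hpoly_power_Vkk unfolding hcocycle_def Vkk_iff_bidegree_le by (intro bidegree_le_sum)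

lemma hcocycle_upper_triangular:
  assumes "e * cnj e = 1"
  shows "hcocycle k \<Delta> (a, b, 0, e) = 0"
proof -
  have "hval Q (e, 0) = hval Q (1, 0)" for Q
    using assms by (cases Q) (simp add: mult.assoc)
  then have "separating \<Delta> (1, 0) (mvec (minv (a, b, 0, e)) (1, 0)) = {}"
    by (auto simp: separating_def simp del: hval.simps)
  then show ?thesis
    by (simp add: hcocycle_def)
qed

lemma hcocycle_in_Cp:
  assumes "odd k" and "\<not> (\<exists>\<beta> \<in> gauss_ints. of_int \<Delta> = \<beta> * cnj \<beta>)"
  shows "hcocycle k \<Delta> \<in> Cp k"
  using hcocycle_mmul[OF _ _ assms] hcocycle_Vkk hcocycle_mneg
  by (auto simp: Cp_def Tmat_def Twmat_def Lmat_def hcocycle_upper_triangular)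

lemma hcocycle_Smat: "hcocycle k \<Delta> Smat = Pk_Delta k \<Delta>"
proof -
  define emb :: "int \<times> complex \<times> int \<Rightarrow> hform" where "emb = (\<lambda>(a, b, c). (of_int a, b, of_int c))"
  have "emb ` Pk_index \<Delta> = separating \<Delta> (1, 0) (mvec (minv Smat) (1, 0))"
  proof (intro equalityI subsetI)
    fix Q assume "Q \<in> emb ` Pk_index \<Delta>"
    then show "Q \<in> separating \<Delta> (1, 0) (mvec (minv Smat) (1, 0))"
      by (auto simp: emb_def separating_def hforms_def Pk_index_def Smat_def)
  next
    fix Q assume Q: "Q \<in> separating \<Delta> (1, 0) (mvec (minv Smat) (1, 0))"
    obtain A B C where QABC: "Q = (A, B, C)" by (cases Q)
    have "A \<in> \<int>" "C \<in> \<int>"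
      using Q by (auto simp: separating_def hforms_def QABC)
    then obtain a c where "A = of_int a" "C = of_int c"
      by (auto elim!: Ints_cases)
    then have "(a, B, c) \<in> Pk_index \<Delta>" and "Q = emb (a, B, c)"
      using Q by (auto simp: separating_def hforms_def Pk_index_def Smat_def emb_def QABC)
    then show "Q \<in> emb ` Pk_index \<Delta>" by blast
  qed
  moreover have "inj_on emb (Pk_index \<Delta>)"
    by (rule inj_onI) (auto simp: emb_def)
  ultimately show ?thesis
    unfolding hcocycle_def Pk_Delta_def
    by (subst sum.reindex_cong[of emb "Pk_index \<Delta>"]) (auto simp: emb_def hpoly_def)
qed

lemma hcocycle_Smat_rotation:
  "eval2 (hcocycle k \<Delta> Smat) (\<i> * z) (cnj \<i> * w) = eval2 (hcocycle k \<Delta> Smat) z w"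
proof -
  define rot :: "complex \<Rightarrow> hform \<Rightarrow> hform" where "rot t = (\<lambda>(A, B, C). (A, t * B, C))" for t
  let ?S = "separating \<Delta> (1, 0) (mvec (minv Smat) (1, 0))"
  have rot_S: "rot t Q \<in> ?S" if "Q \<in> ?S" "t \<in> {\<i>, - \<i>}" for Q t
  proof -
    have "t \<in> gauss_ints" "t * cnj t = 1"
      using that(2) by auto
    then show ?thesis
      using that(1) by (cases Q) (auto simp: rot_def separating_def hforms_def Smat_def mult_ac)
  qed
  have "(\<Sum>Q\<in>?S. eval2 (hpoly Q ^ k) (\<i> * z) (cnj \<i> * w)) = (\<Sum>Q\<in>?S. eval2 (hpoly Q ^ k) z w)"
  proof (rule sum.reindex_bij_witness[where i = "rot (- \<i>)" and j = "rot \<i>"])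
    fix Q assume "Q \<in> ?S"
    then show "rot \<i> Q \<in> ?S" "rot (- \<i>) Q \<in> ?S"
      using rot_S by simp_all
    show "rot (- \<i>) (rot \<i> Q) = Q" "rot \<i> (rot (- \<i>) Q) = Q"
      by (cases Q, simp add: rot_def)+
    show "eval2 (hpoly (rot \<i> Q) ^ k) z w = eval2 (hpoly Q ^ k) (\<i> * z) (cnj \<i> * w)"
      by (cases Q) (simp add: rot_def algebra_simps)
  qed
  then show ?thesis
    by (simp add: hcocycle_def)
qed

section \<open>Cocycles vanishing on the upper triangular generators\<close>

lemma
  assumes "f \<in> Cp k"
  shows Cp_Vkk: "\<And>g. g \<in> SL2Zi \<Longrightarrow> f g \<in> Vkk k"
    and Cp_mneg: "\<And>g. g \<in> SL2Zi \<Longrightarrow> f (mneg g) = f g"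
    and Cp_mmul: "\<And>g h. g \<in> SL2Zi \<Longrightarrow> h \<in> SL2Zi \<Longrightarrow> f (mmul g h) = slash k (f g) h + f h"
    and Cp_Tmat: "f Tmat = 0" and Cp_Twmat: "f Twmat = 0" and Cp_Lmat: "f Lmat = 0"
  using assms by (auto simp: Cp_def)

lemma Cp_Imat:
  assumes "f \<in> Cp k"
  shows "f Imat = 0"
proof -
  have "mmul Lmat Lmat = mneg Imat"
    by (simp add: Lmat_def Imat_def)
  then show ?thesis
    using Cp_mmul[OF assms, of Lmat Lmat] Cp_mneg[OF assms, of Imat] Cp_Lmat[OF assms] SL2Zi_generators
    by simp
qed

lemma Cp_Smat_in_Wkk:
  assumes "f \<in> Cp k"
  shows "f Smat \<in> Wkk k"
proof -
  note SL2 = SL2Zi_generators SL2Zi_mmul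
  note f_mmul = Cp_mmul[OF assms] and f_mneg = Cp_mneg[OF assms]
  note f_T = Cp_Tmat[OF assms] and f_Tw = Cp_Twmat[OF assms] and f_L = Cp_Lmat[OF assms]
  let ?P = "f Smat"
  have PV: "?P \<in> Vkk k"
    by (rule Cp_Vkk[OF assms SL2(2)])
  have I: "f Imat = 0" "f (mneg Imat) = 0"
    using Cp_Imat[OF assms] Cp_mneg[OF assms SL2(1)] by simp_all
  have "mmul Smat Smat = mneg Imat"
    by (simp add: Smat_def Imat_def)
  then have S: "slash k ?P Smat + ?P = 0"
    using f_mmul[of Smat Smat] I SL2 by simp
  have "mmul Lmat Smat = mneg (mmul Smat Lmat)"
    by (simp add: Smat_def Lmat_def)
  then have L: "?P = slash k ?P Lmat"
    using f_mmul[of Lmat Smat] f_mmul[of Smat Lmat] f_mneg[of "mmul Smat Lmat"] f_L SL2 by simp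
  have U: "f Umat = ?P"
    using f_mmul[of Tmat Smat] f_T SL2 by (simp add: Umat_def)
  have "mmul Umat (mmul Umat Umat) = mneg Imat"
    by (simp add: Umat_def Tmat_def Smat_def Imat_def)
  then have U3: "slash k ?P (mmul Umat Umat) + (slash k ?P Umat + ?P) = 0"
    using f_mmul[of Umat "mmul Umat Umat"] f_mmul[of Umat Umat] U I SL2
    by (simp add: Umat_def)
  have E: "f Emat = ?P"
    using f_mmul[of "mmul Twmat Smat" Lmat] f_mmul[of Twmat Smat] f_Tw f_L L SL2 by (simp add: Emat_def)
  have "mmul Emat (mmul Emat Emat) = Imat"
    by (simp add: Emat_def Twmat_def Smat_def Lmat_def Imat_def)
  then have E3: "slash k ?P (mmul Emat Emat) + (slash k ?P Emat + ?P) = 0"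
    using f_mmul[of Emat "mmul Emat Emat"] f_mmul[of Emat Emat] E I SL2
    by (simp add: Emat_def)
  show ?thesis
    unfolding Wkk_def kerX_def slash_gr_def
    using PV slash_Imat[OF PV] S L U3 E3
    by (simp add: cst_1 cst_minus add.commute add.left_commute)
qed

lemma Cp_Tq:
  assumes f: "f \<in> Cp k" and "q \<in> gauss_ints"
  shows "f (Tq q) = 0"
proof -
  have shift: "f (Tq (x + y)) = f (Tq y)" if "f (Tq x) = 0" "x \<in> gauss_ints" "y \<in> gauss_ints" for x y
    using Cp_mmul[OF f SL2Zi_Tq SL2Zi_Tq, of x y] that by (simp add: Tq_add)
  have minus: "f (Tq (- x)) = 0" if "f (Tq x) = 0" "x \<in> gauss_ints" for x
    using shift[of x "- x"] that Cp_Imat[OF f] by (simp add: Tq_def Imat_def)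
  have multiple: "f (Tq (of_int m * x)) = 0" if "f (Tq x) = 0" "x \<in> gauss_ints" for m x
  proof (induction m rule: int_induct[where k = 0])
    case base
    then show ?case using Cp_Imat[OF f] by (simp add: Tq_def Imat_def)
  next
    case (step1 m)
    have "of_int m * x \<in> gauss_ints"
      using that(2) by blast
    then show ?case
      using shift[of x "of_int m * x"] step1 that by (simp add: algebra_simps)
  next
    case (step2 m)
    have "of_int m * x \<in> gauss_ints"
      using that(2) by blast
    then show ?case
      using shift[of "- x" "of_int m * x"] minus step2 that by (simp add: algebra_simps)
  qed
  obtain x y where "q = Complex (of_int x) (of_int y)"
    using assms(2) by (rule gauss_ints_cases)
  then have "q = of_int x + of_int y * \<i>"
    by (simp add: complex_eq_iff)
  moreover have "f (Tq 1) = 0" "f (Tq \<i>) = 0"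
    using Cp_Tmat[OF f] Cp_Twmat[OF f] by (simp_all add: Tq_def Tmat_def Twmat_def)
  then have "f (Tq (of_int x)) = 0" "f (Tq (of_int y * \<i>)) = 0"
    using multiple[where x = 1 and m = x] multiple[where x = \<i> and m = y] by simp_all
  ultimately show ?thesis
    using shift[of "of_int x" "of_int y * \<i>"] gauss_ints_mult[OF gauss_ints_of_int gauss_ints_ii] by simp
qed

lemma SL2Zi_induct [consumes 1, case_names mmul mneg Tq Smat Lmat]:
  assumes "\<gamma> \<in> SL2Zi"
    and mmul: "\<And>g h. g \<in> SL2Zi \<Longrightarrow> h \<in> SL2Zi \<Longrightarrow> P g \<Longrightarrow> P h \<Longrightarrow> P (mmul g h)"
    and mneg: "\<And>g. g \<in> SL2Zi \<Longrightarrow> P g \<Longrightarrow> P (mneg g)"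
    and Tq: "\<And>q. q \<in> gauss_ints \<Longrightarrow> P (Tq q)"
    and Smat: "P Smat" and Lmat: "P Lmat"
  shows "P \<gamma>"
proof -
  have "P (a, b, c, e)" if "(a, b, c, e) \<in> SL2Zi" for a b c e
    using that
  proof (induction "gauss_norm c" arbitrary: a b c e rule: less_induct)
    case less
    have G: "a \<in> gauss_ints" "b \<in> gauss_ints" "c \<in> gauss_ints" "e \<in> gauss_ints" "a * e - b * c = 1"
      using less.prems by (auto simp: SL2Zi_def)
    show ?case
    proof (cases "c = 0")
      case True
      then have "a * e = 1"
        using G(5) by simp
      then have "a \<noteq> 0"
        by auto
      with \<open>a * e = 1\<close> have "e = 1 / a"
        by (simp add: eq_divide_eq mult.commute)
      then consider "(a, 0, 0, e) = Tq 0" | "(a, 0, 0, e) = mneg (Tq 0)" | "(a, 0, 0, e) = Lmat"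
        | "(a, 0, 0, e) = mneg Lmat"
        using gauss_ints_unit[OF G(1,4) \<open>a * e = 1\<close>]
        by (auto simp: Tq_def Lmat_def divide_complex_def)
      then have "P (a, 0, 0, e)"
        by cases (use Tq mneg Lmat SL2Zi_Tq SL2Zi_generators(5) in auto)
      moreover have "(a, b, c, e) = mmul (a, 0, 0, e) (Tq (b * e))"
        using True \<open>a * e = 1\<close> by (simp add: Tq_def algebra_simps)
      moreover have "(a, 0, 0, e) \<in> SL2Zi"
        using G \<open>a * e = 1\<close> by (simp add: SL2Zi_def)
      ultimately show ?thesis
        using mmul SL2Zi_Tq Tq G by (metis gauss_ints_mult)
    next
      case False
      obtain q where q: "q \<in> gauss_ints" "cmod (a - q * c) < cmod c"
        using gauss_ints_euclidean[OF G(1) False] by blast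
      define g where "g = (- c, - e, a - q * c, b - q * e)"
      have "(- c) * (b - q * e) - (- e) * (a - q * c) = a * e - b * c"
        by (simp add: algebra_simps)
      then have g: "g \<in> SL2Zi"
        using G q(1) by (auto simp: g_def SL2Zi_def)
      have "gauss_norm (a - q * c) < gauss_norm c"
        using G q by (intro gauss_norm_less) auto
      then have "P g"
        using less.hyps g by (simp add: g_def)
      moreover have "(a, b, c, e) = mmul (Tq q) (mmul (mneg Smat) g)"
        by (simp add: Tq_def Smat_def g_def algebra_simps)
      moreover have "mneg Smat \<in> SL2Zi" "mmul (mneg Smat) g \<in> SL2Zi"
        using SL2Zi_generators(2) g by (simp_all add: SL2Zi_mneg SL2Zi_mmul)
      ultimately show ?thesis
        using mmul[of "mneg Smat" g] mmul[of "Tq q"] mneg[OF SL2Zi_generators(2) Smat] SL2Zi_Tq[OF q(1)] Tq[OF q(1)] g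
        by simp
    qed
  qed
  then show ?thesis
    using assms(1) by (cases \<gamma>) simp
qed

lemma Cp_unique:
  assumes f: "f \<in> Cp k" and g: "g \<in> Cp k" and "g Smat = f Smat" and "\<gamma> \<in> SL2Zi"
  shows "g \<gamma> = f \<gamma>"
  using \<open>\<gamma> \<in> SL2Zi\<close>
proof (induction rule: SL2Zi_induct)
  case (mmul x y)
  then show ?case using Cp_mmul[OF f] Cp_mmul[OF g] by simp
next
  case (mneg x)
  then show ?case using Cp_mneg[OF f] Cp_mneg[OF g] by simp
next
  case (Tq q)
  then show ?case using Cp_Tq[OF f] Cp_Tq[OF g] by simp
next
  case Smat
  then show ?case using \<open>g Smat = f Smat\<close> .
next
  case Lmat
  then show ?case using Cp_Lmat[OF f] Cp_Lmat[OF g] by simp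
qed

theorem proposition5p3:
  fixes k :: nat and \<Delta> :: int
  assumes "0 < \<Delta>"
    and "\<not> (\<exists>\<beta> \<in> gauss_ints. of_int \<Delta> = \<beta> * cnj \<beta>)"
    and "1 \<le> k" and "odd k"
  shows "Pk_Delta k \<Delta> \<in> Wkk1 k
    \<and> (\<exists>f \<in> Cp k. f Smat = Pk_Delta k \<Delta>
          \<and> (\<forall>g \<in> Cp k. g Smat = Pk_Delta k \<Delta> \<longrightarrow> (\<forall>\<gamma> \<in> SL2Zi. g \<gamma> = f \<gamma>)))"
proof -
  have f: "hcocycle k \<Delta> \<in> Cp k"
    using assms(4,2) by (rule hcocycle_in_Cp)
  have "Pk_Delta k \<Delta> \<in> Wkk1 k"
    using Cp_Smat_in_Wkk[OF f] hcocycle_Smat_rotation[of k \<Delta>]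
    by (simp add: Wkk1_def hcocycle_Smat)
  moreover have "\<forall>g \<in> Cp k. g Smat = Pk_Delta k \<Delta> \<longrightarrow> (\<forall>\<gamma> \<in> SL2Zi. g \<gamma> = hcocycle k \<Delta> \<gamma>)"
    using Cp_unique[OF f] by (simp add: hcocycle_Smat)
  ultimately show ?thesis
    using f hcocycle_Smat by blast
qed

end
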